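(* Consider a linear scoring model on items with feature vectors $x_i\in\mathbb{R}^d$ and weight vector $w\in\mathbb{R}^d$, with scores $s_i=\sum_{f=1}^d w_f x_{if}$. For a pair of items $(i,j)$ put $\Delta_{ij}^{(f)}=w_f(x_{if}-x_{jf})$ and $Z_{ij}=\sum_{f=1}^d|\Delta_{ij}^{(f)}|$, and suppose $Z_{ij}>0$. Let $\{\Psi^{(d)}\}_{d\ge1}$ be any family of maps $\Psi^{(d)}:\mathbb{R}^d_{\ge0}\setminus\{0\}\to\Delta^{d-1}$ (values in the standard simplex) satisfying refinement consistency: for every $d$, every $a\in\mathbb{R}^d_{\ge0}\setminus\{0\}$, every $k$ and every $r,q\ge0$ with $r+q=a_k$, the vector $a^{[k\to(r,q)]}=(a_1,\dots,a_{k-1},r,q,a_{k+1},\dots,a_d)$ satisfies, if $a_k>0$, $\Psi^{(d+1)}(a^{[k\to(r,q)]})=(\Psi^{(d)}_1(a),\dots,\Psi^{(d)}_{k-1}(a),\frac{r}{a_k}\Psi^{(d)}_k(a),\frac{q}{a_k}\Psi^{(d)}_k(a),\Psi^{(d)}_{k+1}(a),\dots,\Psi^{(d)}_d(a))$, and, if $a_k=0$, $\Psi^{(d+1)}(a^{[k\to(0,0)]})$ agrees with $\Psi^{(d)}(a)$ on non-refined coordinates and is $0$ on the two refined coordinates. Then, with $a_f=|\Delta_{ij}^{(f)}|$, for every $f$, \[ \Psi^{(d)}_f(a)=\rho_{ij}^{(f)}:=\frac{|\Delta_{ij}^{(f)}|}{Z_{ij}}. \] That is, the influence share $\rho_{ij}^{(f)}$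 is the unique refinement-consistent local budgeting rule for linear pairwise effort.
   Context: $\Delta^{d-1}$ denotes the standard simplex $\{p\in\mathbb{R}^d_{\ge0}:\sum_f p_f=1\}$. A pair with $Z_{ij}>0$ is called informative; $\rho_{ij}^{(f)}$ is the local influence share of factor $f$. *)

theory Defs
  imports Complex_Main
begin

text \<open>Vectors in R^d are represented as real lists of length d (coordinate f is at
 list index f, 0-based). A family of maps Psi^(d) : R^d_{>=0} minus 0 -> simplex, d >= 1,
 is represented by one function on lists; Psi^(d) is its restriction to lists of length d.\<close>

definition nonneg_nonzero :: "real list \<Rightarrow> bool" where
  "nonneg_nonzero a \<longleftrightarrow> (\<forall>v\<in>set a. v \<ge> 0) \<and> (\<exists>v\<in>set a. v \<noteq> 0)"

definition in_simplex :: "nat \<Rightarrow> real list \<Rightarrow> bool" where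
  "in_simplex d p \<longleftrightarrow> length p = d \<and> (\<forall>v\<in>set p. v \<ge> 0) \<and> sum_list p = 1"

definition refine :: "real list \<Rightarrow> nat \<Rightarrow> real \<Rightarrow> real \<Rightarrow> real list" where
  "refine a k r q = take k a @ [r, q] @ drop (Suc k) a"

definition simplex_valued :: "(real list \<Rightarrow> real list) \<Rightarrow> bool" where
  "simplex_valued \<Psi> \<longleftrightarrow> (\<forall>a. nonneg_nonzero a \<longrightarrow> in_simplex (length a) (\<Psi> a))"

definition refinement_consistent :: "(real list \<Rightarrow> real list) \<Rightarrow> bool" where
  "refinement_consistent \<Psi> \<longleftrightarrow>
    (\<forall>a k r q. nonneg_nonzero a \<longrightarrow> k < length a \<longrightarrow> r \<ge> 0 \<longrightarrow> q \<ge> 0 \<longrightarrow> r + q = a ! k \<longrightarrow>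
       (a ! k > 0 \<longrightarrow> \<Psi> (refine a k r q) =
           take k (\<Psi> a) @ [r / a ! k * \<Psi> a ! k, q / a ! k * \<Psi> a ! k] @ drop (Suc k) (\<Psi> a)) \<and>
       (a ! k = 0 \<longrightarrow> \<Psi> (refine a k 0 0) =
           take k (\<Psi> a) @ [0, 0] @ drop (Suc k) (\<Psi> a)))"

definition score :: "nat \<Rightarrow> (nat \<Rightarrow> real) \<Rightarrow> ('i \<Rightarrow> nat \<Rightarrow> real) \<Rightarrow> 'i \<Rightarrow> real" where
  "score d w x i = (\<Sum>f<d. w f * x i f)"

definition Delta :: "(nat \<Rightarrow> real) \<Rightarrow> ('i \<Rightarrow> nat \<Rightarrow> real) \<Rightarrow> 'i \<Rightarrow> 'i \<Rightarrow> nat \<Rightarrow> real" where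
  "Delta w x i j f = w f * (x i f - x j f)"

definition Zpair :: "nat \<Rightarrow> (nat \<Rightarrow> real) \<Rightarrow> ('i \<Rightarrow> nat \<Rightarrow> real) \<Rightarrow> 'i \<Rightarrow> 'i \<Rightarrow> real" where
  "Zpair d w x i j = (\<Sum>f<d. \<bar>Delta w x i j f\<bar>)"

definition rho :: "nat \<Rightarrow> (nat \<Rightarrow> real) \<Rightarrow> ('i \<Rightarrow> nat \<Rightarrow> real) \<Rightarrow> 'i \<Rightarrow> 'i \<Rightarrow> nat \<Rightarrow> real" where
  "rho d w x i j f = \<bar>Delta w x i j f\<bar> / Zpair d w x i j"

end

theory Submission
  imports Defs
begin

text \<open>A vector of length one can only be sent to [1], the sole
  point of the 1-simplex. A longer vector p @ [v, t] is the refinement of the last coordinate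
  of the shorter vector p @ [v + t], which has the same sum S; and splitting a coordinate of a
  vector whose image is a / S yields, by the refinement rule, the refined vector divided by S.\<close>

lemma nonneg_nonzero_iff_sum_list_pos:
  assumes "\<forall>v\<in>set a. v \<ge> 0"
  shows "nonneg_nonzero a \<longleftrightarrow> sum_list a > 0"
  using assms sum_list_nonneg[of a] sum_list_nonneg_eq_0_iff[of a]
  by (force simp: nonneg_nonzero_def)

lemma simplex_valued_singleton:
  assumes "simplex_valued \<Psi>" and "t > 0"
  shows "\<Psi> [t] = [1]"
proof -
  have "nonneg_nonzero [t]" using assms(2) by (simp add: nonneg_nonzero_def)
  then have "in_simplex 1 (\<Psi> [t])"
    using assms(1) unfolding simplex_valued_def by fastforce
  then show ?thesis by (auto simp: in_simplex_def length_Suc_conv)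
qed

lemma refinement_consistent_refine_scaled:
  assumes rc: "refinement_consistent \<Psi>"
    and a: "nonneg_nonzero a" "k < length a"
    and rq: "r \<ge> 0" "q \<ge> 0" "r + q = a ! k"
    and scaled: "\<Psi> a = map (\<lambda>u. u / S) a"
  shows "\<Psi> (refine a k r q) = map (\<lambda>u. u / S) (refine a k r q)"
proof (cases "a ! k > 0")
  case True
  then have "\<Psi> (refine a k r q) =
      take k (\<Psi> a) @ [r / a ! k * \<Psi> a ! k, q / a ! k * \<Psi> a ! k] @ drop (Suc k) (\<Psi> a)"
    using rc a rq by (simp add: refinement_consistent_def)
  also have "\<dots> = map (\<lambda>u. u / S) (take k a) @ [r / S, q / S] @ map (\<lambda>u. u / S) (drop (Suc k) a)"
    using True a(2) by (simp add: scaled take_map drop_map)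
  finally show ?thesis by (simp add: refine_def)
next
  case False
  then have "r = 0" "q = 0" "a ! k = 0" using rq by auto
  then have "\<Psi> (refine a k r q) = take k (\<Psi> a) @ [0, 0] @ drop (Suc k) (\<Psi> a)"
    using rc[unfolded refinement_consistent_def, rule_format, of a k 0 0] a by simp
  then show ?thesis using \<open>r = 0\<close> \<open>q = 0\<close> by (simp add: scaled refine_def take_map drop_map)
qed

lemma refinement_consistent_imp_normalized:
  assumes sv: "simplex_valued \<Psi>" and rc: "refinement_consistent \<Psi>"
    and "\<forall>v\<in>set a. v \<ge> 0" and "sum_list a > 0"
  shows "\<Psi> a = map (\<lambda>v. v / sum_list a) a"
  using assms(3,4)
proof (induction a rule: measure_induct_rule[of length])
  case (less a)
  consider (single) t where "a = [t]" | (split) p v t where "a = p @ [v, t]"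
  proof (cases a rule: rev_cases)
    case Nil
    then show thesis using less.prems by simp
  next
    case (snoc b t)
    then show thesis by (cases b rule: rev_cases) (auto intro: that)
  qed
  then show ?case
  proof cases
    case single
    then show ?thesis using simplex_valued_singleton[OF sv] less.prems by simp
  next
    case split
    let ?b = "p @ [v + t]"
    have b_nonneg: "\<forall>u\<in>set ?b. u \<ge> 0" and vt: "v \<ge> 0" "t \<ge> 0"
      using less.prems split by auto
    have b_sum: "sum_list ?b = sum_list a" using split by simp
    have "\<Psi> ?b = map (\<lambda>u. u / sum_list a) ?b"
      using less.IH[of ?b] b_nonneg less.prems b_sum split by simp
    moreover have "refine ?b (length p) v t = a"
      using split by (simp add: refine_def)
    moreover have "nonneg_nonzero ?b"
      using b_nonneg less.prems b_sum nonneg_nonzero_iff_sum_list_pos by metis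
    ultimately show ?thesis
      using refinement_consistent_refine_scaled[OF rc, of ?b "length p" v t] vt by simp
  qed
qed

theorem corollary4p2:
  fixes \<Psi> :: "real list \<Rightarrow> real list"
    and d :: nat and w :: "nat \<Rightarrow> real" and x :: "'i \<Rightarrow> nat \<Rightarrow> real" and i j :: 'i
  assumes "simplex_valued \<Psi>"
    and "refinement_consistent \<Psi>"
    and "Zpair d w x i j > 0"
  shows "\<forall>f<d. \<Psi> (map (\<lambda>g. \<bar>Delta w x i j g\<bar>) [0..<d]) ! f = rho d w x i j f"
proof -
  let ?a = "map (\<lambda>g. \<bar>Delta w x i j g\<bar>) [0..<d]"
  have sum_a: "sum_list ?a = Zpair d w x i j"
    by (simp add: Zpair_def sum_list_sum_nth atLeast0LessThan)
  have "\<Psi> ?a = map (\<lambda>v. v / Zpair d w x i j) ?a"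
    using refinement_consistent_imp_normalized[OF assms(1,2), of ?a] sum_a assms(3) by auto
  then show ?thesis by (simp add: rho_def)
qed

end
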